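(* Consider the action of $O(2)$ on $M_2(\mathbb{R})$ by conjugation. Each nontrivial irreducible $O(2)$-invariant cone of $M_2(\mathbb{R})$ is generated by exactly one of the following matrices: (0) $\begin{pmatrix}0&0\\0&0\end{pmatrix}$; (1) $I=\begin{pmatrix}1&0\\0&1\end{pmatrix}$; (2) $E=\begin{pmatrix}0&1\\-1&0\end{pmatrix}$; (3) $e_1=\begin{pmatrix}1&0\\0&-1\end{pmatrix}$; (4) $\begin{pmatrix}a+1&0\\0&a-1\end{pmatrix}$ with $a>0$; (5) $\begin{pmatrix}a+s&1\\-1&a-s\end{pmatrix}$ with $a,s\ge0$ and $(a,s)\neq(0,0)$.
   Context: $O(2)=\{P\in M_2(\mathbb{R}):PP^t=I\}$. A cone is a subset $C\subseteq M_2(\mathbb{R})$ closed under multiplication by nonzero scalars; an $O(2)$-invariant cone is a cone closed under conjugation $X\mapsto PXP^{-1}$ by all $P\in O(2)$; an irreducible $O(2)$-invariant cone is an $O(2)$-invariant cone not properly containing any $O(2)$-invariant cone. The irreducible invariant cones partition $M_2(\mathbb{R})$, and the cone generated by a matrix $X$ is the irreducible invariant cone containing $X$ (for $X\neq0$ this is $\{\lambda PXP^{-1}:\lambda\in\mathbb{R}\setminus\{0\},P\in O(2)\}$, and for $X=0$ it is $\{0\}$). *)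

theory Defs
  imports "HOL-Analysis.Analysis"
begin

type_synonym m2 = "real^2^2"

definition mat2 :: "real \<Rightarrow> real \<Rightarrow> real \<Rightarrow> real \<Rightarrow> m2" where
  "mat2 a b c d = (\<chi> i j. if i = 1 then (if j = 1 then a else b) else (if j = 1 then c else d))"

definition O2 :: "m2 set" where
  "O2 = {P. P ** transpose P = mat 1}"

definition is_cone :: "m2 set \<Rightarrow> bool" where
  "is_cone C \<longleftrightarrow> C \<noteq> {} \<and> (\<forall>X\<in>C. \<forall>c::real. c \<noteq> 0 \<longrightarrow> c *\<^sub>R X \<in> C)"

definition O2_invariant_cone :: "m2 set \<Rightarrow> bool" where
  "O2_invariant_cone C \<longleftrightarrow> is_cone C \<and>
     (\<forall>X\<in>C. \<forall>P\<in>O2. P ** X ** matrix_inv P \<in> C)"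

definition irreducible_O2_cone :: "m2 set \<Rightarrow> bool" where
  "irreducible_O2_cone C \<longleftrightarrow> O2_invariant_cone C \<and>
     \<not> (\<exists>D. O2_invariant_cone D \<and> D \<subset> C)"

definition cone_gen :: "m2 \<Rightarrow> m2 set" where
  "cone_gen X = (if X = 0 then {0}
     else {c *\<^sub>R (P ** X ** matrix_inv P) | c P. c \<noteq> 0 \<and> P \<in> O2})"

definition normal_forms :: "m2 set" where
  "normal_forms =
     {mat2 0 0 0 0, mat2 1 0 0 1, mat2 0 1 (-1) 0, mat2 1 0 0 (-1)}
     \<union> {mat2 (a + 1) 0 0 (a - 1) | a. a > 0}
     \<union> {mat2 (a + s) 1 (-1) (a - s) | a s. a \<ge> 0 \<and> s \<ge> 0 \<and> (a, s) \<noteq> (0, 0)}"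

end

(*
  Write X = a I + b E + p e1 + q e2.  Conjugation by the rotation through t fixes a and b and
  rotates (p, q) through 2t, so X is O(2)-conjugate to a I + b E + r e1 with r >= 0.
  Conjugation by diag(1, -1), or by the coordinate swap followed by the scalar -1, flips the
  sign of b, respectively of a, and dividing by the first nonzero one of b, r, a lands on one
  of the listed matrices.  Conversely, X |-> c P X P^T multiplies trace X, det X and
  trace (X X^T) by c, c^2 and c^2; on a I + b E + r e1 these are 2a, a^2 + b^2 - r^2 and
  2 (a^2 + b^2 + r^2), so a, b^2 and r^2 are fixed up to the factors c, c^2, c^2, and this
  separates the listed matrices.  Finally, an irreducible invariant cone is the cone generated
  by any of its elements, since that cone is an invariant subcone.
*)

theory Submission
  imports Defs
begin

lemma mat2_nth [simp]:
  "mat2 a b c d $ 1 $ 1 = a" "mat2 a b c d $ 1 $ 2 = b"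
  "mat2 a b c d $ 2 $ 1 = c" "mat2 a b c d $ 2 $ 2 = d"
  by (simp_all add: mat2_def)

lemma eq_mat2_iff:
  "(X::m2) = mat2 a b c d \<longleftrightarrow> X$1$1 = a \<and> X$1$2 = b \<and> X$2$1 = c \<and> X$2$2 = d"
  by (auto simp: vec_eq_iff forall_2)

lemma mat2_eq_iff: "mat2 a b c d = mat2 a' b' c' d' \<longleftrightarrow> a = a' \<and> b = b' \<and> c = c' \<and> d = d'"
  by (metis mat2_nth)

lemma mat2_mult:
  "mat2 a b c d ** mat2 e f g h = mat2 (a*e + b*g) (a*f + b*h) (c*e + d*g) (c*f + d*h)"
  by (simp add: eq_mat2_iff matrix_matrix_mult_def sum_2)

lemma transpose_mat2: "transpose (mat2 a b c d) = mat2 a c b d"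
  by (simp add: eq_mat2_iff transpose_def)

lemma scaleR_mat2: "k *\<^sub>R mat2 a b c d = mat2 (k*a) (k*b) (k*c) (k*d)"
  by (simp add: eq_mat2_iff)

lemma mat_1_eq_mat2: "mat 1 = mat2 1 0 0 1"
  by (simp add: eq_mat2_iff mat_def)

lemma trace_mat2: "trace (mat2 a b c d) = a + d"
  by (simp add: trace_def sum_2)

lemma det_mat2: "det (mat2 a b c d) = a*d - b*c"
  by (simp add: det_2)

lemma orthogonal_matrix_mat2:
  "orthogonal_matrix (mat2 x y z w) \<longleftrightarrow> x*x + z*z = 1 \<and> x*y + z*w = 0 \<and> y*y + w*w = 1"
  by (auto simp: orthogonal_matrix transpose_mat2 mat2_mult mat_1_eq_mat2 mat2_eq_iff mult.commute)

lemma O2_iff_orthogonal_matrix: "P \<in> O2 \<longleftrightarrow> orthogonal_matrix P"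
  by (simp add: O2_def orthogonal_matrix_def matrix_left_right_inverse)

lemma matrix_inv_orthogonal:
  assumes "orthogonal_matrix (P :: real^'n^'n)"
  shows "matrix_inv P = transpose P"
  unfolding matrix_inv_def
proof (rule some_equality)
  show "P ** transpose P = mat 1 \<and> transpose P ** P = mat 1"
    using assms by (simp add: orthogonal_matrix_def)
next
  fix Q assume Q: "P ** Q = mat 1 \<and> Q ** P = mat 1"
  have "Q = (transpose P ** P) ** Q"
    using assms by (simp add: orthogonal_matrix_def)
  also have "\<dots> = transpose P"
    using Q by (simp add: matrix_mul_rid flip: matrix_mul_assoc)
  finally show "Q = transpose P" .
qed

definition O2_equiv :: "m2 \<Rightarrow> m2 \<Rightarrow> bool" where
  "O2_equiv X Y \<longleftrightarrow> (\<exists>c P. c \<noteq> 0 \<and> orthogonal_matrix P \<and> Y = c *\<^sub>R (P ** X ** transpose P))"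

lemma O2_equivI:
  "c \<noteq> 0 \<Longrightarrow> orthogonal_matrix P \<Longrightarrow> Y = c *\<^sub>R (P ** X ** transpose P) \<Longrightarrow> O2_equiv X Y"
  unfolding O2_equiv_def by blast

lemma O2_equiv_scaleR: "c \<noteq> 0 \<Longrightarrow> O2_equiv X (c *\<^sub>R X)"
  by (rule O2_equivI[of c "mat 1"]) (simp_all add: orthogonal_matrix_id transpose_mat)

lemma O2_equiv_refl: "O2_equiv X X"
  using O2_equiv_scaleR[of 1] by simp

lemma O2_equiv_conj: "orthogonal_matrix P \<Longrightarrow> O2_equiv X (P ** X ** transpose P)"
  by (rule O2_equivI[of 1 P]) simp_all

lemma scaleR_matrix_mult:
  fixes A B :: "real^'n^'n"
  shows "(c *\<^sub>R A) ** B = c *\<^sub>R (A ** B)" "A ** (c *\<^sub>R B) = c *\<^sub>R (A ** B)"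
  by (simp_all add: scalar_matrix_assoc matrix_scalar_ac)

lemma O2_equiv_trans:
  assumes "O2_equiv X Y" "O2_equiv Y Z"
  shows "O2_equiv X Z"
proof -
  obtain c P where "c \<noteq> 0" "orthogonal_matrix P" and Y: "Y = c *\<^sub>R (P ** X ** transpose P)"
    using assms(1) unfolding O2_equiv_def by blast
  moreover obtain d Q where "d \<noteq> 0" "orthogonal_matrix Q" and Z: "Z = d *\<^sub>R (Q ** Y ** transpose Q)"
    using assms(2) unfolding O2_equiv_def by blast
  moreover have "Z = (d * c) *\<^sub>R ((Q ** P) ** X ** transpose (Q ** P))"
    by (simp add: Y Z scaleR_matrix_mult matrix_transpose_mul matrix_mul_assoc)
  ultimately show ?thesis
    by (intro O2_equivI[of "d * c" "Q ** P"]) (simp_all add: orthogonal_matrix_mul)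
qed

lemma O2_equiv_sym:
  assumes "O2_equiv X Y"
  shows "O2_equiv Y X"
proof -
  obtain c P where c: "c \<noteq> 0" and P: "orthogonal_matrix P" and Y: "Y = c *\<^sub>R (P ** X ** transpose P)"
    using assms unfolding O2_equiv_def by blast
  have "transpose P ** Y ** P = c *\<^sub>R ((transpose P ** P) ** X ** (transpose P ** P))"
    by (simp add: Y scaleR_matrix_mult matrix_mul_assoc)
  then have "X = (1 / c) *\<^sub>R (transpose P ** Y ** transpose (transpose P))"
    using c P by (simp add: orthogonal_matrix_def)
  then show ?thesis
    using c P by (intro O2_equivI[of "1 / c" "transpose P"]) simp_all
qed

lemma cone_gen_eq_O2_equiv: "cone_gen X = {Y. O2_equiv X Y}"
proof (cases "X = 0")
  case True
  then show ?thesis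
    by (auto simp: cone_gen_def O2_equiv_def intro: orthogonal_matrix_id)
next
  case False
  have "(\<exists>c P. Y = c *\<^sub>R (P ** X ** matrix_inv P) \<and> c \<noteq> 0 \<and> P \<in> O2) \<longleftrightarrow> O2_equiv X Y" for Y
    unfolding O2_equiv_def O2_iff_orthogonal_matrix by (metis matrix_inv_orthogonal)
  with False show ?thesis
    unfolding cone_gen_def by (simp add: set_eq_iff)
qed

lemma cone_gen_cong: "O2_equiv X Y \<Longrightarrow> cone_gen X = cone_gen Y"
  unfolding cone_gen_eq_O2_equiv using O2_equiv_sym O2_equiv_trans by blast

lemma O2_invariant_cone_cone_gen: "O2_invariant_cone (cone_gen X)"
  unfolding O2_invariant_cone_def is_cone_def cone_gen_eq_O2_equiv
  using O2_equiv_refl O2_equiv_trans O2_equiv_scaleR O2_equiv_conj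
  by (auto simp: O2_iff_orthogonal_matrix matrix_inv_orthogonal)

lemma cone_gen_subset:
  assumes "O2_invariant_cone C" "X \<in> C"
  shows "cone_gen X \<subseteq> C"
  using assms unfolding cone_gen_eq_O2_equiv O2_equiv_def O2_invariant_cone_def is_cone_def
  by (auto simp: O2_iff_orthogonal_matrix matrix_inv_orthogonal)

lemma irreducible_O2_cone_eq_cone_gen:
  assumes "irreducible_O2_cone C" "X \<in> C"
  shows "C = cone_gen X"
  using assms cone_gen_subset O2_invariant_cone_cone_gen
  unfolding irreducible_O2_cone_def by blast

lemma trace_scaleR: "trace (c *\<^sub>R (A :: real^'n^'n)) = c * trace A"
  by (simp add: trace_def sum_distrib_left)

lemma det_scaleR_m2: "det (c *\<^sub>R (A :: m2)) = c\<^sup>2 * det A"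
  by (simp add: det_2 power2_eq_square algebra_simps)

lemma trace_orthogonal_conj:
  assumes "orthogonal_matrix (P :: real^'n^'n)"
  shows "trace (P ** X ** transpose P) = trace X"
proof -
  have "trace (P ** X ** transpose P) = trace ((transpose P ** P) ** X)"
    by (simp add: trace_mul_sym[of "P ** X"] matrix_mul_assoc)
  then show ?thesis
    using assms by (simp add: orthogonal_matrix_def)
qed

lemma det_orthogonal_conj:
  assumes "orthogonal_matrix (P :: real^'n^'n)"
  shows "det (P ** X ** transpose P) = det X"
proof -
  have "det P * det P = 1"
    using det_orthogonal_matrix[OF assms] by auto
  then show ?thesis
    by (simp add: det_mul)
qed

lemma O2_equiv_invariants:
  assumes "O2_equiv X Y"
  obtains c where "c \<noteq> 0" "trace Y = c * trace X" "det Y = c\<^sup>2 * det X"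
    "trace (Y ** transpose Y) = c\<^sup>2 * trace (X ** transpose X)"
proof -
  obtain c P where c: "c \<noteq> 0" and P: "orthogonal_matrix P" and Y: "Y = c *\<^sub>R (P ** X ** transpose P)"
    using assms unfolding O2_equiv_def by blast
  have "Y ** transpose Y = c\<^sup>2 *\<^sub>R (P ** X ** (transpose P ** P) ** transpose X ** transpose P)"
    by (simp add: Y scaleR_matrix_mult transpose_scalar matrix_transpose_mul matrix_mul_assoc
        power2_eq_square)
  also have "\<dots> = c\<^sup>2 *\<^sub>R (P ** (X ** transpose X) ** transpose P)"
    using P by (simp add: orthogonal_matrix_def matrix_mul_assoc)
  finally show ?thesis
    using that[OF c] P
    by (simp add: Y trace_scaleR det_scaleR_m2 trace_orthogonal_conj det_orthogonal_conj)
qed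

(* a I + b E + p e1 + q e2, where e2 is the matrix with rows (0, 1) and (1, 0). *)
definition coord_mat :: "real \<Rightarrow> real \<Rightarrow> real \<Rightarrow> real \<Rightarrow> m2" where
  "coord_mat a b p q = mat2 (a + p) (b + q) (q - b) (a - p)"

lemma coord_mat_surj: "\<exists>a b p q. X = coord_mat a b p q"
proof (intro exI)
  show "X = coord_mat ((X$1$1 + X$2$2) / 2) ((X$1$2 - X$2$1) / 2)
                      ((X$1$1 - X$2$2) / 2) ((X$1$2 + X$2$1) / 2)"
    by (simp add: coord_mat_def eq_mat2_iff field_simps)
qed

lemma coord_mat_eq_iff:
  "coord_mat a b p q = coord_mat a' b' p' q' \<longleftrightarrow> a = a' \<and> b = b' \<and> p = p' \<and> q = q'"
  by (auto simp: coord_mat_def mat2_eq_iff)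

lemma coord_mat_scaleR: "k *\<^sub>R coord_mat a b p q = coord_mat (k*a) (k*b) (k*p) (k*q)"
  by (simp add: coord_mat_def scaleR_mat2 algebra_simps)

lemma coord_mat_invariants:
  "trace (coord_mat a b p q) = 2 * a"
  "det (coord_mat a b p q) = a\<^sup>2 + b\<^sup>2 - p\<^sup>2 - q\<^sup>2"
  "trace (coord_mat a b p q ** transpose (coord_mat a b p q)) = 2 * (a\<^sup>2 + b\<^sup>2 + p\<^sup>2 + q\<^sup>2)"
  by (simp_all add: coord_mat_def trace_mat2 det_mat2 transpose_mat2 mat2_mult power2_eq_square algebra_simps)

definition rot :: "real \<Rightarrow> m2" where
  "rot t = mat2 (cos t) (- sin t) (sin t) (cos t)"

lemma orthogonal_matrix_rot: "orthogonal_matrix (rot t)"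
  by (simp add: rot_def orthogonal_matrix_mat2 flip: power2_eq_square)

lemma rot_conj_coord_mat:
  "rot t ** coord_mat a b p q ** transpose (rot t)
     = coord_mat a b (p * cos (2*t) - q * sin (2*t)) (p * sin (2*t) + q * cos (2*t))"
proof -
  have pythagoras: "cos t * cos t + sin t * sin t = 1"
    by (simp flip: power2_eq_square)
  show ?thesis
    unfolding rot_def coord_mat_def
    by (simp add: transpose_mat2 mat2_mult mat2_eq_iff sin_double cos_double power2_eq_square)
      (use pythagoras in algebra)
qed

lemma O2_equiv_diagonal:
  obtains a b r where "r \<ge> 0" "O2_equiv X (coord_mat a b r 0)"
proof -
  obtain a b p q where X: "X = coord_mat a b p q"
    using coord_mat_surj by blast
  define r where "r = sqrt (p\<^sup>2 + q\<^sup>2)"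
  have r2: "r\<^sup>2 = p\<^sup>2 + q\<^sup>2"
    by (simp add: r_def)
  show ?thesis
  proof (cases "r = 0")
    case True
    then have "p = 0" "q = 0"
      using r2 sum_power2_eq_zero_iff by auto
    then show ?thesis
      using that[of 0 a b] X O2_equiv_refl by simp
  next
    case False
    have "(p / r)\<^sup>2 + (q / r)\<^sup>2 = 1"
      using False by (simp add: power_divide flip: add_divide_distrib r2)
    then obtain s where s: "p = r * cos s" "q = r * sin s"
      using False by (metis sincos_total_2pi nonzero_mult_div_cancel_left times_divide_eq_right)
    have "r * (cos s)\<^sup>2 + r * (sin s)\<^sup>2 = r"
      by (simp flip: distrib_left)
    then have "rot (- s / 2) ** X ** transpose (rot (- s / 2)) = coord_mat a b r 0"
      by (simp add: X rot_conj_coord_mat s algebra_simps flip: power2_eq_square)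
    moreover have "r \<ge> 0"
      by (simp add: r_def)
    ultimately show ?thesis
      using that O2_equiv_conj[OF orthogonal_matrix_rot] by metis
  qed
qed

lemma O2_equiv_neg_skew: "O2_equiv (coord_mat a b r 0) (coord_mat a (- b) r 0)"
proof (rule O2_equivI)
  show "orthogonal_matrix (mat2 1 0 0 (- 1))"
    by (simp add: orthogonal_matrix_mat2)
  show "coord_mat a (- b) r 0 = 1 *\<^sub>R (mat2 1 0 0 (- 1) ** coord_mat a b r 0 ** transpose (mat2 1 0 0 (- 1)))"
    by (simp add: coord_mat_def transpose_mat2 mat2_mult mat2_eq_iff)
qed simp

lemma O2_equiv_neg_trace: "O2_equiv (coord_mat a b r 0) (coord_mat (- a) b r 0)"
proof (rule O2_equivI)
  show "orthogonal_matrix (mat2 0 1 1 0)"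
    by (simp add: orthogonal_matrix_mat2)
  show "coord_mat (- a) b r 0 = (- 1) *\<^sub>R (mat2 0 1 1 0 ** coord_mat a b r 0 ** transpose (mat2 0 1 1 0))"
    by (simp add: coord_mat_def transpose_mat2 mat2_mult mat2_eq_iff scaleR_mat2)
qed simp

lemma O2_equiv_abs: "O2_equiv (coord_mat a b r 0) (coord_mat \<bar>a\<bar> \<bar>b\<bar> r 0)"
proof -
  have "O2_equiv (coord_mat a b r 0) (coord_mat \<bar>a\<bar> b r 0)"
    using O2_equiv_refl O2_equiv_neg_trace by (cases "a \<ge> 0") auto
  moreover have "O2_equiv (coord_mat \<bar>a\<bar> b r 0) (coord_mat \<bar>a\<bar> \<bar>b\<bar> r 0)"
    using O2_equiv_refl O2_equiv_neg_skew by (cases "b \<ge> 0") auto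
  ultimately show ?thesis
    by (rule O2_equiv_trans)
qed

definition normal_params :: "real \<Rightarrow> real \<Rightarrow> real \<Rightarrow> bool" where
  "normal_params a b r \<longleftrightarrow> (a = 0 \<and> b = 0 \<and> r = 0) \<or> (a = 1 \<and> b = 0 \<and> r = 0)
     \<or> (b = 0 \<and> r = 1 \<and> a \<ge> 0) \<or> (b = 1 \<and> a \<ge> 0 \<and> r \<ge> 0)"

lemma normal_forms_eq: "normal_forms = {coord_mat a b r 0 | a b r. normal_params a b r}"
proof -
  have "mat2 0 0 0 0 = coord_mat 0 0 0 0" "mat2 1 0 0 1 = coord_mat 1 0 0 0"
    "mat2 0 1 (- 1) 0 = coord_mat 0 1 0 0" "mat2 1 0 0 (- 1) = coord_mat 0 0 1 0"
    "mat2 (a + 1) 0 0 (a - 1) = coord_mat a 0 1 0" "mat2 (a + s) 1 (- 1) (a - s) = coord_mat a 1 s 0"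
    for a s :: real
    by (simp_all add: coord_mat_def)
  then have "normal_forms =
      {coord_mat 0 0 0 0, coord_mat 1 0 0 0, coord_mat 0 1 0 0, coord_mat 0 0 1 0}
      \<union> {coord_mat a 0 1 0 | a. a > 0}
      \<union> {coord_mat a 1 s 0 | a s. a \<ge> 0 \<and> s \<ge> 0 \<and> (a, s) \<noteq> (0, 0)}"
    unfolding normal_forms_def by simp
  also have "\<dots> = {coord_mat a b r 0 | a b r. normal_params a b r}"
    by (auto simp: normal_params_def coord_mat_eq_iff)
  finally show ?thesis .
qed

lemma O2_equiv_normal_form:
  obtains a b r where "normal_params a b r" "O2_equiv X (coord_mat a b r 0)"
proof -
  obtain a b r where "r \<ge> 0" and X: "O2_equiv X (coord_mat \<bar>a\<bar> \<bar>b\<bar> r 0)"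
    using O2_equiv_diagonal O2_equiv_abs O2_equiv_trans by metis
  define k where "k = (if b \<noteq> 0 then \<bar>b\<bar> else if r \<noteq> 0 then r else if a \<noteq> 0 then \<bar>a\<bar> else 1)"
  have "k > 0"
    using \<open>r \<ge> 0\<close> by (simp add: k_def)
  then have "O2_equiv X (coord_mat (\<bar>a\<bar> / k) (\<bar>b\<bar> / k) (r / k) 0)"
    using O2_equiv_trans[OF X O2_equiv_scaleR[of "1 / k"]] by (simp add: coord_mat_scaleR)
  moreover have "normal_params (\<bar>a\<bar> / k) (\<bar>b\<bar> / k) (r / k)"
    using \<open>r \<ge> 0\<close> by (auto simp: normal_params_def k_def)
  ultimately show ?thesis
    using that by blast
qed

lemma normal_params_unique:
  assumes "normal_params a b r" "normal_params a' b' r'"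
    and "O2_equiv (coord_mat a b r 0) (coord_mat a' b' r' 0)"
  shows "a = a' \<and> b = b' \<and> r = r'"
proof -
  obtain c where "c \<noteq> 0" and a': "a' = c * a" and "b'\<^sup>2 = c\<^sup>2 * b\<^sup>2" "r'\<^sup>2 = c\<^sup>2 * r\<^sup>2"
  proof (rule O2_equiv_invariants[OF assms(3)])
    fix c assume "c \<noteq> 0" and inv: "trace (coord_mat a' b' r' 0) = c * trace (coord_mat a b r 0)"
      "det (coord_mat a' b' r' 0) = c\<^sup>2 * det (coord_mat a b r 0)"
      "trace (coord_mat a' b' r' 0 ** transpose (coord_mat a' b' r' 0))
         = c\<^sup>2 * trace (coord_mat a b r 0 ** transpose (coord_mat a b r 0))"
    have "a' = c * a" "a'\<^sup>2 + b'\<^sup>2 - r'\<^sup>2 = c\<^sup>2 * (a\<^sup>2 + b\<^sup>2 - r\<^sup>2)"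
      "2 * (a'\<^sup>2 + b'\<^sup>2 + r'\<^sup>2) = c\<^sup>2 * (2 * (a\<^sup>2 + b\<^sup>2 + r\<^sup>2))"
      using inv by (simp_all add: coord_mat_invariants)
    then show ?thesis
      using that[OF \<open>c \<noteq> 0\<close>] by algebra
  qed
  have "a' = a" if "c\<^sup>2 = 1" "a \<ge> 0" "a' \<ge> 0"
    using a' that by (auto simp: power2_eq_1_iff)
  then show ?thesis
    using assms(1,2) \<open>c \<noteq> 0\<close> a' \<open>b'\<^sup>2 = c\<^sup>2 * b\<^sup>2\<close> \<open>r'\<^sup>2 = c\<^sup>2 * r\<^sup>2\<close>
    unfolding normal_params_def by (auto simp: power2_eq_iff_nonneg)
qed

theorem mainTheorem10:
  assumes "irreducible_O2_cone C"
  shows "\<exists>!M. M \<in> normal_forms \<and> cone_gen M = C"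
proof -
  obtain X where "X \<in> C"
    using assms unfolding irreducible_O2_cone_def O2_invariant_cone_def is_cone_def by blast
  then have C: "C = cone_gen X"
    using assms by (rule irreducible_O2_cone_eq_cone_gen[rotated])
  obtain a b r where N: "normal_params a b r" and X: "O2_equiv X (coord_mat a b r 0)"
    by (rule O2_equiv_normal_form)
  show ?thesis
  proof (rule ex1I)
    show "coord_mat a b r 0 \<in> normal_forms \<and> cone_gen (coord_mat a b r 0) = C"
      using N C cone_gen_cong[OF X] by (auto simp: normal_forms_eq)
  next
    fix M assume M: "M \<in> normal_forms \<and> cone_gen M = C"
    then obtain a' b' r' where N': "normal_params a' b' r'" and M': "M = coord_mat a' b' r' 0"
      by (auto simp: normal_forms_eq)
    have "M \<in> cone_gen (coord_mat a b r 0)"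
      using M C cone_gen_cong[OF X] O2_equiv_refl by (auto simp: cone_gen_eq_O2_equiv)
    then show "M = coord_mat a b r 0"
      using normal_params_unique[OF N N'] M' by (auto simp: cone_gen_eq_O2_equiv)
  qed
qed

end
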